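(* Let $k\geqslant 1$, let $n_1,\ldots,n_k$ be positive integers and $a_1,\ldots,a_k$ integers with $0\leqslant a_s<n_s$ for each $s$. Suppose that $p$ is a prime such that $$\sum_{s=1}^k\frac{e^{2\pi i a_s/p}}{1-e^{2\pi i n_s/p}}=0.$$ Then $$n_1+\cdots+n_k-k+1\geqslant |S(n_1,\ldots,n_k)|\geqslant p.$$
   Context: For positive integers $n_1,\ldots,n_k$, $S(n_1,\ldots,n_k)=\{r/n_s: r=0,\ldots,n_s-1;\ s=1,\ldots,k\}$, a set of rational numbers, and $|S(\cdot)|$ denotes its cardinality. (The hypothesis implicitly requires $p\nmid n_s$ for all $s$, so that the denominators are nonzero.) *)

theory Defs
  imports "HOL-Analysis.Analysis"
begin

definition S_set :: "nat \<Rightarrow> (nat \<Rightarrow> nat) \<Rightarrow> rat set" where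
  "S_set k n = {of_nat r / of_nat (n s) | r s. s \<in> {1..k} \<and> r < n s}"

end

theory Submission
  imports Defs "HOL-Computational_Algebra.Polynomial_Factorial"
    "HOL-Computational_Algebra.Fundamental_Theorem_Algebra"
begin

(*
  Let zeta = e^(2 pi i / p) and f(z) = (SUM s. z^(a s) / (1 - z^(n s))), so that f(zeta) = 0.
  Clearing the denominators 1 - z^(n s) gives an integer polynomial vanishing at zeta. The
  polynomial 1 + x + ... + x^(p-1) is irreducible (Eisenstein at p after x := x + 1), so that
  integer polynomial also vanishes at every conjugate zeta^j, and f has the p - 1 zeros
  zeta, ..., zeta^(p-1). Over the least common denominator, the product of z - w over the set W
  of all (n s)-th roots of unity, the numerator of f has degree < |W| because a s < n s, and it
  is nonzero because f(1/2) > 0. Hence p - 1 < |W|, and q |-> e^(2 pi i q) maps S(n_1,...,n_k)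
  onto W. For the upper bound, every n s contributes at most n s - 1 elements to S besides the
  common element 0.
*)

lemma map_poly_of_int_add [simp]: "map_poly of_int (p + q) = map_poly of_int p + map_poly of_int q"
  by (intro poly_eqI) (simp add: coeff_map_poly)

lemma map_poly_of_int_diff [simp]: "map_poly of_int (p - q) = map_poly of_int p - map_poly of_int q"
  by (intro poly_eqI) (simp add: coeff_map_poly)

lemma map_poly_of_int_mult [simp]: "map_poly of_int (p * q) = map_poly of_int p * map_poly of_int q"
  by (intro poly_eqI) (simp add: coeff_map_poly coeff_mult)

lemma map_poly_of_int_smult [simp]: "map_poly of_int (smult c p) = smult (of_int c) (map_poly of_int p)"
  by (intro poly_eqI) (simp add: coeff_map_poly)

lemma map_poly_of_int_sum [simp]:
  "map_poly of_int (\<Sum>x\<in>A. f x) = (\<Sum>x\<in>A. map_poly of_int (f x))"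
  by (induction A rule: infinite_finite_induct) auto

lemma map_poly_of_int_prod [simp]:
  "(map_poly of_int (\<Prod>x\<in>A. f x) :: 'a :: comm_ring_1 poly) = (\<Prod>x\<in>A. map_poly of_int (f x))"
  by (induction A rule: infinite_finite_induct) auto

lemma eisenstein_factor_degree_0:
  fixes A B E :: "int poly" and p :: int
  assumes "prime p" and E: "A * B = E" and "\<not> p\<^sup>2 dvd coeff E 0"
    and low: "\<And>i. i < degree E \<Longrightarrow> p dvd coeff E i" and "\<not> p dvd lead_coeff E"
    and "p dvd coeff A 0"
  shows "degree B = 0"
proof -
  have "E \<noteq> 0" using \<open>\<not> p dvd lead_coeff E\<close> by auto
  hence "degree E = degree A + degree B" using E degree_mult_eq by fastforce
  have B0: "\<not> p dvd coeff B 0"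
  proof
    assume "p dvd coeff B 0"
    with \<open>p dvd coeff A 0\<close> have "p * p dvd coeff A 0 * coeff B 0" by (rule mult_dvd_mono)
    thus False using \<open>\<not> p\<^sup>2 dvd coeff E 0\<close> E[symmetric] by (simp add: power2_eq_square coeff_mult_0)
  qed
  have "\<exists>i. \<not> p dvd coeff A i"
  proof (rule ccontr)
    assume "\<nexists>i. \<not> p dvd coeff A i"
    hence "p dvd coeff E i" for i unfolding E[symmetric] coeff_mult by (auto intro!: dvd_sum)
    thus False using \<open>\<not> p dvd lead_coeff E\<close> by blast
  qed
  define i where "i = (LEAST i. \<not> p dvd coeff A i)"
  have Ai: "\<not> p dvd coeff A i" unfolding i_def using \<open>\<exists>i. _\<close> by (rule LeastI_ex)
  have Aj: "p dvd coeff A j" if "j < i" for j using not_less_Least[OF that[unfolded i_def]] by blast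
  \<comment> \<open>the first coefficient of A not divisible by p yields a coefficient of E of the same index not
    divisible by p, so that index is at least degree E\<close>
  have "coeff E i = (\<Sum>j<i. coeff A j * coeff B (i - j)) + coeff A i * coeff B 0"
    unfolding E[symmetric] coeff_mult lessThan_Suc_atMost[symmetric] sum.lessThan_Suc by simp
  moreover have "p dvd (\<Sum>j<i. coeff A j * coeff B (i - j))" by (intro dvd_sum) (simp add: Aj)
  moreover have "\<not> p dvd coeff A i * coeff B 0"
    using Ai B0 \<open>prime p\<close> by (simp add: prime_dvd_mult_iff)
  ultimately have "\<not> i < degree E" using low by (metis dvd_add_right_iff)
  moreover have "i \<le> degree A" using Ai by (intro le_degree) auto
  ultimately show ?thesis using \<open>degree E = _\<close> by linarith
qed

lemma eisenstein_irreducible: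
  fixes E :: "int poly" and p :: int
  assumes "prime p" and "content E = 1" and "degree E > 0" and sq: "\<not> p\<^sup>2 dvd coeff E 0"
    and low: "\<And>i. i < degree E \<Longrightarrow> p dvd coeff E i" and lead: "\<not> p dvd lead_coeff E"
  shows "irreducible E"
proof (rule irreducibleI)
  show "E \<noteq> 0" and "\<not> E dvd 1" using \<open>degree E > 0\<close> by (auto simp: is_unit_poly_iff)
  have const_factor_unit: "A dvd 1" if "A dvd E" and "degree A = 0" for A
  proof -
    have "[:coeff A 0:] dvd E" using that by (metis degree_0_id)
    hence "coeff A 0 dvd 1" using \<open>content E = 1\<close> by (simp add: const_poly_dvd_iff_dvd_content)
    thus ?thesis using \<open>degree A = 0\<close> by (metis degree_0_id is_unit_const_poly_iff)
  qed
  fix A B assume "E = A * B"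
  have "p dvd coeff E 0" using low \<open>degree E > 0\<close> by blast
  hence "p dvd coeff A 0 \<or> p dvd coeff B 0"
    using \<open>E = A * B\<close> \<open>prime p\<close> by (simp add: coeff_mult_0 prime_dvd_mult_iff)
  hence "degree B = 0 \<or> degree A = 0"
    using eisenstein_factor_degree_0[OF \<open>prime p\<close> _ sq low lead, of A B]
      eisenstein_factor_degree_0[OF \<open>prime p\<close> _ sq low lead, of B A]
      \<open>E = A * B\<close> by (auto simp: mult.commute)
  thus "A dvd 1 \<or> B dvd 1" using const_factor_unit \<open>E = A * B\<close> by auto
qed

definition geom_poly :: "nat \<Rightarrow> int poly" where
  "geom_poly p = (\<Sum>i<p. monom 1 i)"

lemma poly_geom_poly: "poly (map_poly of_int (geom_poly p)) (x :: 'a :: comm_ring_1) = (\<Sum>i<p. x ^ i)"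
  by (simp add: geom_poly_def poly_sum map_poly_monom poly_monom)

lemma coeff_geom_poly_shift: "coeff (pcompose (geom_poly p) [:1, 1:]) k = int (p choose Suc k)"
proof -
  define E where "E = pcompose (geom_poly p) [:1, 1:]"
  have "pCons 0 E = [:1, 1:] ^ p - 1"
  proof (rule poly_ext)
    fix x :: int
    have "poly (pCons 0 E) x = x * (\<Sum>i<p. (x + 1) ^ i)"
      by (simp add: E_def poly_pcompose geom_poly_def poly_sum poly_monom add.commute)
    also have "\<dots> = (x + 1) ^ p - 1" using power_diff_1_eq[of "x + 1" p] by simp
    finally show "poly (pCons 0 E) x = poly ([:1, 1:] ^ p - 1) x" by (simp add: add.commute)
  qed
  hence "coeff E k = coeff ([:1, 1:] ^ p - 1) (Suc k)" by (metis coeff_pCons_Suc)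
  also have "\<dots> = coeff ([:1, 1:] ^ p) (Suc k)" by simp
  also have "\<dots> = int (p choose Suc k)"
  proof (cases "Suc k \<le> p")
    case True
    then show ?thesis by (simp add: coeff_linear_poly_power)
  next
    case False
    then show ?thesis by (simp add: coeff_eq_0 degree_linear_power)
  qed
  finally show ?thesis unfolding E_def .
qed

lemma irreducible_pcompose_linear:
  fixes F :: "'a :: idom poly"
  assumes "irreducible (pcompose F [:c, 1:])"
  shows "irreducible F"
proof (rule irreducibleI)
  have unit_shift: "A dvd 1" if "pcompose A [:c, 1:] dvd 1" for A :: "'a poly"
  proof -
    have "degree A = degree (pcompose A [:c, 1:])" by (simp add: degree_pcompose)
    also have "\<dots> = 0" using that by (auto simp: is_unit_poly_iff)
    finally have "pcompose A [:c, 1:] = A" by (metis degree_0_id pcompose_const)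
    thus ?thesis using that by simp
  qed
  show "F \<noteq> 0" using assms by auto
  show "\<not> F dvd 1"
  proof
    assume "F dvd 1"
    then obtain d where "F = [:d:]" by (auto simp: is_unit_poly_iff)
    thus False using assms \<open>F dvd 1\<close> irreducible_not_unit by fastforce
  qed
  fix A B assume "F = A * B"
  hence "pcompose F [:c, 1:] = pcompose A [:c, 1:] * pcompose B [:c, 1:]" by (simp add: pcompose_mult)
  thus "A dvd 1 \<or> B dvd 1" using assms unit_shift by (auto dest: irreducibleD)
qed

lemma irreducible_geom_poly:
  assumes "prime p"
  shows "irreducible (geom_poly p)"
proof -
  define E where "E = pcompose (geom_poly p) [:1, 1:]"
  have "p > 1" using prime_gt_1_nat[OF assms] .
  have cE: "coeff E k = int (p choose Suc k)" for k unfolding E_def by (rule coeff_geom_poly_shift)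
  have "degree E = p - 1"
  proof (rule antisym)
    show "degree E \<le> p - 1" by (rule degree_le) (use \<open>p > 1\<close> in \<open>auto simp: cE\<close>)
    show "p - 1 \<le> degree E" by (rule le_degree) (use \<open>p > 1\<close> in \<open>simp add: cE\<close>)
  qed
  have "lead_coeff E = 1" using \<open>degree E = p - 1\<close> \<open>p > 1\<close> by (simp add: cE)
  have "irreducible E"
  proof (rule eisenstein_irreducible[of "int p"])
    show "prime (int p)" using assms by simp
    show "content E = 1" using content_dvd_coeff[of E "degree E"] \<open>lead_coeff E = 1\<close>
      by (metis is_unit_normalize normalize_content)
    show "degree E > 0" and "\<not> int p dvd lead_coeff E"
      using \<open>degree E = p - 1\<close> \<open>lead_coeff E = 1\<close> \<open>p > 1\<close> by auto
    show "\<not> (int p)\<^sup>2 dvd coeff E 0"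
    proof
      assume "(int p)\<^sup>2 dvd coeff E 0"
      hence "int p * int p \<le> int p" using \<open>p > 1\<close> by (intro zdvd_imp_le) (auto simp: cE power2_eq_square)
      thus False using \<open>p > 1\<close> by simp
    qed
    show "int p dvd coeff E i" if "i < degree E" for i
      using dvd_choose_prime[OF _ _ _ assms, of "Suc i"] that \<open>degree E = p - 1\<close>
      by (simp add: cE flip: of_nat_dvd_iff)
  qed
  thus ?thesis unfolding E_def by (rule irreducible_pcompose_linear)
qed

lemma least_degree_root_poly_pseudo_dvd:
  fixes g H :: "int poly" and z :: "'a :: field_char_0"
  assumes "g \<noteq> 0" and "poly (map_poly of_int g) z = 0"
    and least: "\<And>h. h \<noteq> 0 \<Longrightarrow> poly (map_poly of_int h) z = 0 \<Longrightarrow> degree g \<le> degree h"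
    and "poly (map_poly of_int H) z = 0"
  shows "\<exists>c q. c \<noteq> 0 \<and> smult c H = g * q"
proof -
  obtain q r where qr: "pseudo_divmod H g = (q, r)" by (metis surj_pair)
  define c where "c = lead_coeff g ^ (Suc (degree H) - degree g)"
  have eq: "smult c H = g * q + r" and "r = 0 \<or> degree r < degree g"
    using pseudo_divmod[OF \<open>g \<noteq> 0\<close> qr] by (auto simp: c_def)
  have "poly (map_poly of_int r) z = (0 :: 'a)"
    using arg_cong[OF eq, of "\<lambda>f. poly (map_poly of_int f) z :: 'a"] assms(2,4) by simp
  hence "r = 0" using least \<open>r = 0 \<or> degree r < degree g\<close> by force
  moreover have "c \<noteq> 0" using \<open>g \<noteq> 0\<close> by (simp add: c_def)
  ultimately show ?thesis using eq by auto
qed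

lemma irreducible_common_root_imp_root:
  fixes F G :: "int poly" and z w :: "'a :: field_char_0"
  assumes "irreducible F" and "poly (map_poly of_int F) z = 0" and "poly (map_poly of_int F) w = 0"
    and "poly (map_poly of_int G) z = 0"
  shows "poly (map_poly of_int G) w = 0"
proof -
  have "F \<noteq> 0" using assms(1) by auto
  then obtain g where "g \<noteq> 0" and gz: "poly (map_poly of_int g) z = 0"
    and least: "\<And>h. h \<noteq> 0 \<Longrightarrow> poly (map_poly of_int h) z = 0 \<Longrightarrow> degree g \<le> degree h"
    using ex_has_least_nat[of "\<lambda>h. h \<noteq> 0 \<and> poly (map_poly of_int h) z = (0 :: 'a)" F degree] assms(2)
    by blast
  have pseudo_dvd: "\<exists>c q. c \<noteq> 0 \<and> smult c H = g * q" if "poly (map_poly of_int H) z = 0" for H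
    by (rule least_degree_root_poly_pseudo_dvd[OF \<open>g \<noteq> 0\<close> gz _ that]) (rule least)
  have "degree g \<noteq> 0"
  proof
    assume "degree g = 0"
    then obtain c where "g = [:c:]" and "c \<noteq> 0" using \<open>g \<noteq> 0\<close> by (metis degree_0_id pCons_eq_0_iff)
    thus False using gz by (simp add: map_poly_pCons)
  qed
  obtain c q where "c \<noteq> 0" and cF: "smult c F = g * q" using pseudo_dvd[OF assms(2)] by blast
  \<comment> \<open>F is prime and too large to divide q, so it divides the polynomial g of least degree\<close>
  have "\<not> F dvd q"
  proof
    assume "F dvd q"
    have "q \<noteq> 0" using cF \<open>c \<noteq> 0\<close> \<open>F \<noteq> 0\<close> by auto
    hence "degree F \<le> degree q" using \<open>F dvd q\<close> by (simp add: dvd_imp_degree_le)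
    moreover have "degree F = degree g + degree q"
      using arg_cong[OF cF, of degree] \<open>c \<noteq> 0\<close> \<open>g \<noteq> 0\<close> \<open>q \<noteq> 0\<close> by (simp add: degree_mult_eq)
    ultimately show False using \<open>degree g \<noteq> 0\<close> by linarith
  qed
  moreover have "F dvd g * q" unfolding cF[symmetric] by (simp add: dvd_smult)
  ultimately have "F dvd g"
    using irreducible_imp_prime_elem[OF \<open>irreducible F\<close>] by (simp add: prime_elem_dvd_mult_iff)
  then obtain h where "g = F * h" by (elim dvdE)
  hence gw: "poly (map_poly of_int g) w = 0" using assms(3) by simp
  obtain c' q' where "c' \<noteq> 0" and cG: "smult c' G = g * q'" using pseudo_dvd[OF assms(4)] by blast
  have "of_int c' * poly (map_poly of_int G) w = poly (map_poly of_int (smult c' G)) w" by simp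
  also have "\<dots> = (0 :: 'a)" using gw by (simp add: cG)
  finally have "of_int c' * poly (map_poly of_int G) w = (0 :: 'a)" .
  thus ?thesis using \<open>c' \<noteq> 0\<close> by simp
qed

lemma poly_geom_poly_root_unity:
  fixes x :: "'a :: field"
  assumes "x ^ p = 1" and "x \<noteq> 1"
  shows "poly (map_poly of_int (geom_poly p)) x = 0"
  using assms by (simp add: poly_geom_poly geometric_sum)

lemma cis_power: "cis (2 * pi / p) ^ m = cis (2 * pi * m / p)"
  by (simp add: Complex.DeMoivre mult_ac)

lemma cis_power_eq_1_iff:
  fixes p m :: nat
  assumes "p > 0"
  shows "cis (2 * pi / p) ^ m = 1 \<longleftrightarrow> p dvd m"
proof -
  have "cis (2 * pi / p) ^ m = exp (2 * of_real pi * \<i> * of_nat m / of_nat p)"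
    unfolding cis_power unfolding cis_conv_exp by (simp add: field_simps)
  thus ?thesis using complex_root_unity_eq_1[of p m] assms by simp
qed

lemma cis_power_power_neq_1:
  fixes p j m :: nat
  assumes "prime p" and "\<not> p dvd j" and "\<not> p dvd m"
  shows "(cis (2 * pi / p) ^ j) ^ m \<noteq> 1"
  using assms prime_gt_0_nat[OF assms(1)]
  by (simp add: cis_power_eq_1_iff prime_dvd_mult_iff flip: power_mult)

definition frac_sum :: "'i set \<Rightarrow> ('i \<Rightarrow> nat) \<Rightarrow> ('i \<Rightarrow> nat) \<Rightarrow> 'a :: field \<Rightarrow> 'a" where
  "frac_sum K \<alpha> n z = (\<Sum>s\<in>K. z ^ \<alpha> s / (1 - z ^ n s))"

definition numerator_prod_denom :: "'i set \<Rightarrow> ('i \<Rightarrow> nat) \<Rightarrow> ('i \<Rightarrow> nat) \<Rightarrow> int poly" where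
  "numerator_prod_denom K \<alpha> n = (\<Sum>s\<in>K. monom 1 (\<alpha> s) * (\<Prod>t\<in>K - {s}. 1 - monom 1 (n t)))"

lemma poly_numerator_prod_denom:
  fixes z :: "'a :: field"
  assumes "finite K" and z: "\<forall>t\<in>K. z ^ n t \<noteq> 1"
  shows "poly (map_poly of_int (numerator_prod_denom K \<alpha> n)) z = frac_sum K \<alpha> n z * (\<Prod>t\<in>K. 1 - z ^ n t)"
proof -
  have "poly (map_poly of_int (numerator_prod_denom K \<alpha> n)) z
      = (\<Sum>s\<in>K. z ^ \<alpha> s * (\<Prod>t\<in>K - {s}. 1 - z ^ n t))"
    by (simp add: numerator_prod_denom_def poly_sum poly_prod poly_monom map_poly_monom)
  also have "\<dots> = (\<Sum>s\<in>K. z ^ \<alpha> s / (1 - z ^ n s) * (\<Prod>t\<in>K. 1 - z ^ n t))"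
  proof (rule sum.cong)
    fix s assume "s \<in> K"
    hence "(\<Prod>t\<in>K. 1 - z ^ n t) = (1 - z ^ n s) * (\<Prod>t\<in>K - {s}. 1 - z ^ n t)"
      using \<open>finite K\<close> by (simp add: prod.remove)
    moreover have "1 - z ^ n s \<noteq> 0" using z \<open>s \<in> K\<close> by auto
    ultimately show "z ^ \<alpha> s * (\<Prod>t\<in>K - {s}. 1 - z ^ n t) =
        z ^ \<alpha> s / (1 - z ^ n s) * (\<Prod>t\<in>K. 1 - z ^ n t)" by simp
  qed simp
  finally show ?thesis by (simp add: frac_sum_def sum_distrib_right)
qed

lemma frac_sum_root_unity_conjugate:
  fixes K :: "'i set" and \<alpha> n :: "'i \<Rightarrow> nat" and p j :: nat
  defines "\<zeta> \<equiv> cis (2 * pi / p)"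
  assumes "prime p" and "finite K" and "\<And>s. s \<in> K \<Longrightarrow> \<not> p dvd n s"
    and "frac_sum K \<alpha> n \<zeta> = 0" and "\<not> p dvd j"
  shows "frac_sum K \<alpha> n (\<zeta> ^ j) = 0"
proof -
  have "p > 0" using prime_gt_0_nat[OF \<open>prime p\<close>] .
  have not_root: "\<forall>t\<in>K. (\<zeta> ^ i) ^ n t \<noteq> 1" if "\<not> p dvd i" for i
    using cis_power_power_neq_1[OF \<open>prime p\<close> that] assms(4) by (simp add: \<zeta>_def)
  have geom_root: "poly (map_poly of_int (geom_poly p)) (\<zeta> ^ i) = 0" if "\<not> p dvd i" for i
    using that \<open>p > 0\<close> by (intro poly_geom_poly_root_unity)
      (simp_all add: \<zeta>_def cis_power_eq_1_iff flip: power_mult)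
  have "\<not> p dvd 1" using \<open>prime p\<close> by (simp add: prime_nat_iff)
  define G where "G = numerator_prod_denom K \<alpha> n"
  have "poly (map_poly of_int G) \<zeta> = 0"
    using poly_numerator_prod_denom[OF \<open>finite K\<close> not_root[OF \<open>\<not> p dvd 1\<close>]] assms(5) by (simp add: G_def)
  hence "poly (map_poly of_int G) (\<zeta> ^ j) = 0"
    using irreducible_common_root_imp_root[OF irreducible_geom_poly[OF \<open>prime p\<close>]]
      geom_root[of 1] geom_root[OF \<open>\<not> p dvd j\<close>] \<open>\<not> p dvd 1\<close> by auto
  moreover have "(\<Prod>t\<in>K. 1 - (\<zeta> ^ j) ^ n t) \<noteq> 0"
    using not_root[OF \<open>\<not> p dvd j\<close>] \<open>finite K\<close> by auto
  ultimately show ?thesis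
    using poly_numerator_prod_denom[OF \<open>finite K\<close> not_root[OF \<open>\<not> p dvd j\<close>]] by (simp add: G_def)
qed

lemma prod_roots_unity_poly:
  assumes "n \<ge> 1"
  shows "(\<Prod>w\<in>{z :: complex. z ^ n = 1}. [:-w, 1:]) = monom 1 n - 1"
proof -
  define X :: "complex poly" where "X = monom 1 n - 1"
  have pX: "poly X z = z ^ n - 1" for z by (simp add: X_def poly_monom)
  have "degree X = n"
  proof (rule antisym)
    show "degree X \<le> n" unfolding X_def by (rule degree_le) (auto simp: coeff_monom coeff_1)
    show "n \<le> degree X" unfolding X_def using assms by (intro le_degree) (auto simp: coeff_monom coeff_1)
  qed
  hence "lead_coeff X = 1" using assms by (simp add: X_def)
  have "rsquarefree X" unfolding rsquarefree_roots
  proof (intro allI notI)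
    fix a assume "poly X a = 0 \<and> poly (pderiv X) a = 0"
    hence "a ^ n = 1" and "of_nat n * a ^ (n - 1) = 0"
      by (auto simp: pX X_def pderiv_diff pderiv_monom poly_monom)
    thus False using assms by (simp add: power_0_left)
  qed
  hence "(\<Prod>z | poly X z = 0. [:-z, 1:]) = X"
    using complex_poly_decompose_rsquarefree[OF \<open>rsquarefree X\<close>] \<open>lead_coeff X = 1\<close> by simp
  moreover have "{z. poly X z = 0} = {z. z ^ n = 1}" by (simp add: pX)
  ultimately show ?thesis by (simp add: X_def)
qed

definition roots_of_unity :: "'i set \<Rightarrow> ('i \<Rightarrow> nat) \<Rightarrow> complex set" where
  "roots_of_unity K n = (\<Union>s\<in>K. {z. z ^ n s = 1})"

lemma finite_roots_of_unity:
  assumes "finite K" and "\<And>s. s \<in> K \<Longrightarrow> n s \<ge> 1"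
  shows "finite (roots_of_unity K n)"
  using assms by (auto simp: roots_of_unity_def intro: finite_roots_unity)

text \<open>Up to sign, the product of all \<open>z - w\<close> with \<open>w \<in> roots_of_unity K n\<close> is the least common
  multiple of the denominators \<open>1 - z ^ n s\<close> of \<open>frac_sum K \<alpha> n z\<close>.\<close>
definition numerator_lcm_denom :: "'i set \<Rightarrow> ('i \<Rightarrow> nat) \<Rightarrow> ('i \<Rightarrow> nat) \<Rightarrow> complex poly" where
  "numerator_lcm_denom K \<alpha> n =
     (\<Sum>s\<in>K. monom 1 (\<alpha> s) * (\<Prod>w\<in>roots_of_unity K n - {z. z ^ n s = 1}. [:-w, 1:]))"

lemma degree_numerator_lcm_denom_less:
  fixes K :: "'i set" and \<alpha> n :: "'i \<Rightarrow> nat"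
  assumes "finite K" and "K \<noteq> {}" and "\<And>s. s \<in> K \<Longrightarrow> \<alpha> s < n s"
  shows "degree (numerator_lcm_denom K \<alpha> n) < card (roots_of_unity K n)"
proof -
  let ?W = "roots_of_unity K n"
  have n1: "n s \<ge> 1" if "s \<in> K" for s using assms(3)[OF that] by simp
  have "finite ?W" using assms(1) n1 by (rule finite_roots_of_unity)
  have roots_finite: "finite {z :: complex. z ^ n s = 1}" if "s \<in> K" for s
    using n1[OF that] by (rule finite_roots_unity)
  have card_roots: "card {z :: complex. z ^ n s = 1} = n s" if "s \<in> K" for s
    using n1[OF that] by (rule card_complex_roots_unity)
  have roots_sub: "{z. z ^ n s = 1} \<subseteq> ?W" if "s \<in> K" for s using that by (auto simp: roots_of_unity_def)
  have n_le_W: "n s \<le> card ?W" if "s \<in> K" for s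
    using card_mono[OF \<open>finite ?W\<close> roots_sub[OF that]] card_roots[OF that] by simp
  have "card ?W > 0" using n_le_W assms(2,3) by fastforce
  thus ?thesis unfolding numerator_lcm_denom_def
  proof (rule degree_sum_less[rotated])
    fix s assume "s \<in> K"
    have "degree (\<Prod>w\<in>?W - {z. z ^ n s = 1}. [:-w, 1:]) = card (?W - {z. z ^ n s = 1})"
      by (subst degree_prod_sum_eq) auto
    also have "\<dots> = card ?W - n s"
      using card_Diff_subset[OF roots_finite roots_sub] card_roots \<open>s \<in> K\<close> by simp
    moreover have "degree (monom 1 (\<alpha> s) * (\<Prod>w\<in>?W - {z. z ^ n s = 1}. [:-w, 1:]))
        \<le> \<alpha> s + degree (\<Prod>w\<in>?W - {z. z ^ n s = 1}. [:-w, 1:])"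
      using degree_mult_le[of "monom (1 :: complex) (\<alpha> s)"] by (simp add: degree_monom_eq)
    ultimately show "degree (monom 1 (\<alpha> s) * (\<Prod>w\<in>?W - {z. z ^ n s = 1}. [:-w, 1:])) < card ?W"
      using n_le_W[OF \<open>s \<in> K\<close>] assms(3)[OF \<open>s \<in> K\<close>] by linarith
  qed
qed

lemma poly_numerator_lcm_denom:
  assumes "finite K" and "\<And>s. s \<in> K \<Longrightarrow> n s \<ge> 1" and z: "z \<notin> roots_of_unity K n"
  shows "poly (numerator_lcm_denom K \<alpha> n) z = - (\<Prod>w\<in>roots_of_unity K n. z - w) * frac_sum K \<alpha> n z"
proof -
  let ?W = "roots_of_unity K n"
  define Q where "Q s = (\<Prod>w\<in>?W - {z. z ^ n s = 1}. [:-w, 1:])" for s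
  have "finite ?W" using assms(1,2) by (rule finite_roots_of_unity)
  have prod_W: "- (\<Prod>w\<in>?W. z - w) = (1 - z ^ n s) * poly (Q s) z" if "s \<in> K" for s
  proof -
    have "{z. z ^ n s = 1} \<subseteq> ?W" using that by (auto simp: roots_of_unity_def)
    hence "(\<Prod>w\<in>?W. z - w) = poly (Q s) z * poly (\<Prod>w\<in>{z. z ^ n s = 1}. [:-w, 1:]) z"
      by (simp add: Q_def poly_prod prod.subset_diff[OF _ \<open>finite ?W\<close>])
    thus ?thesis using assms(2)[OF that] by (simp add: prod_roots_unity_poly poly_monom algebra_simps)
  qed
  have "poly (numerator_lcm_denom K \<alpha> n) z = (\<Sum>s\<in>K. z ^ \<alpha> s * poly (Q s) z)"
    by (simp add: numerator_lcm_denom_def Q_def poly_sum poly_monom)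
  also have "\<dots> = (\<Sum>s\<in>K. - (\<Prod>w\<in>?W. z - w) * (z ^ \<alpha> s / (1 - z ^ n s)))"
  proof (rule sum.cong)
    fix s assume "s \<in> K"
    hence "1 - z ^ n s \<noteq> 0" using z by (auto simp: roots_of_unity_def)
    thus "z ^ \<alpha> s * poly (Q s) z = - (\<Prod>w\<in>?W. z - w) * (z ^ \<alpha> s / (1 - z ^ n s))"
      unfolding prod_W[OF \<open>s \<in> K\<close>] by simp
  qed simp
  finally show ?thesis by (simp add: frac_sum_def sum_distrib_left)
qed

lemma card_zeros_frac_sum_less:
  fixes K :: "'i set" and \<alpha> n :: "'i \<Rightarrow> nat"
  assumes "finite K" and "K \<noteq> {}" and "\<And>s. s \<in> K \<Longrightarrow> \<alpha> s < n s"
  defines "Z \<equiv> {z. z \<notin> roots_of_unity K n \<and> frac_sum K \<alpha> n z = 0}"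
  shows "finite Z" and "card Z < card (roots_of_unity K n)"
proof -
  define P where "P = numerator_lcm_denom K \<alpha> n"
  have n1: "n s \<ge> 1" if "s \<in> K" for s using assms(3)[OF that] by simp
  have P_eq: "poly P z = - (\<Prod>w\<in>roots_of_unity K n. z - w) * frac_sum K \<alpha> n z"
    if "z \<notin> roots_of_unity K n" for z
    unfolding P_def using \<open>finite K\<close> n1 that by (rule poly_numerator_lcm_denom)
  \<comment> \<open>at the point 1/2 every summand is positive\<close>
  define x :: complex where "x = of_real (1 / 2)"
  have half_pow: "(1 / 2 :: real) ^ m < 1" if "m \<ge> 1" for m using that by (simp add: power_less_one_iff)
  have "x ^ n s \<noteq> 1" if "s \<in> K" for s
  proof -
    have "x ^ n s = of_real ((1 / 2) ^ n s)" by (simp add: x_def)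
    thus ?thesis using half_pow[OF n1[OF that]] by (metis of_real_eq_1_iff less_irrefl)
  qed
  hence "x \<notin> roots_of_unity K n" by (auto simp: roots_of_unity_def)
  have "(\<Sum>s\<in>K. (1 / 2 :: real) ^ \<alpha> s / (1 - (1 / 2) ^ n s)) > 0"
    using half_pow n1 assms(1,2) by (intro sum_pos) auto
  moreover have "frac_sum K \<alpha> n x = of_real (\<Sum>s\<in>K. (1 / 2 :: real) ^ \<alpha> s / (1 - (1 / 2) ^ n s))"
    by (simp add: frac_sum_def x_def)
  ultimately have "frac_sum K \<alpha> n x \<noteq> 0" by (metis of_real_eq_0_iff less_irrefl)
  moreover have "(\<Prod>w\<in>roots_of_unity K n. x - w) \<noteq> 0"
    using finite_roots_of_unity[OF \<open>finite K\<close> n1] \<open>x \<notin> _\<close> by (auto simp: prod_zero_iff)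
  ultimately have "P \<noteq> 0" using P_eq[OF \<open>x \<notin> _\<close>] by force
  have "Z \<subseteq> {z. poly P z = 0}" using P_eq by (auto simp: Z_def)
  thus "finite Z" using poly_roots_finite[OF \<open>P \<noteq> 0\<close>] by (rule finite_subset)
  have "card Z \<le> card {z. poly P z = 0}"
    using \<open>Z \<subseteq> _\<close> poly_roots_finite[OF \<open>P \<noteq> 0\<close>] by (rule card_mono[rotated])
  also have "\<dots> \<le> degree P" using card_poly_roots_bound[OF \<open>P \<noteq> 0\<close>] .
  also have "\<dots> < card (roots_of_unity K n)"
    unfolding P_def using assms(1-3) by (rule degree_numerator_lcm_denom_less)
  finally show "card Z < card (roots_of_unity K n)" .
qed

lemma prime_le_card_roots_of_unity:
  fixes K :: "'i set" and \<alpha> n :: "'i \<Rightarrow> nat" and p :: nat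
  assumes "prime p" and "finite K" and "K \<noteq> {}" and "\<And>s. s \<in> K \<Longrightarrow> \<alpha> s < n s"
    and "\<And>s. s \<in> K \<Longrightarrow> \<not> p dvd n s" and "frac_sum K \<alpha> n (cis (2 * pi / p)) = 0"
  shows "p \<le> card (roots_of_unity K n)"
proof -
  define \<zeta> where "\<zeta> = cis (2 * pi / p)"
  define Z where "Z = {z. z \<notin> roots_of_unity K n \<and> frac_sum K \<alpha> n z = 0}"
  have "p > 0" using prime_gt_0_nat[OF \<open>prime p\<close>] .
  have "\<zeta> ^ j \<in> Z" if "j \<in> {1..<p}" for j
  proof -
    have "\<not> p dvd j" using that by (auto dest: dvd_imp_le)
    hence "\<zeta> ^ j \<notin> roots_of_unity K n"
      using cis_power_power_neq_1[OF \<open>prime p\<close>] assms(5) by (auto simp: \<zeta>_def roots_of_unity_def)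
    moreover have "frac_sum K \<alpha> n (\<zeta> ^ j) = 0"
      unfolding \<zeta>_def using assms(1,2,5,6) \<open>\<not> p dvd j\<close> by (rule frac_sum_root_unity_conjugate)
    ultimately show ?thesis by (simp add: Z_def)
  qed
  hence "(\<lambda>j. \<zeta> ^ j) ` {1..<p} \<subseteq> Z" by blast
  have "inj_on (\<lambda>j. \<zeta> ^ j) {1..<p}"
    using Complex.bij_betw_roots_unity[OF \<open>p > 0\<close>] by (auto simp: \<zeta>_def cis_power bij_betw_def inj_on_def)
  hence "p - 1 = card ((\<lambda>j. \<zeta> ^ j) ` {1..<p})" by (simp add: card_image)
  also have "\<dots> \<le> card Z"
    using card_zeros_frac_sum_less(1)[OF assms(2-4)] \<open>_ \<subseteq> Z\<close> by (simp add: Z_def card_mono)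
  also have "\<dots> < card (roots_of_unity K n)"
    using card_zeros_frac_sum_less(2)[OF assms(2-4)] by (simp add: Z_def)
  finally show ?thesis by linarith
qed

lemma S_set_eq_UN: "S_set k n = (\<Union>s\<in>{1..k}. (\<lambda>r. of_nat r / of_nat (n s)) ` {..<n s})"
  unfolding S_set_def by blast

lemma finite_S_set: "finite (S_set k n)"
  by (simp add: S_set_eq_UN)

lemma card_S_set_le:
  assumes "\<And>s. s \<in> {1..k} \<Longrightarrow> n s > 0"
  shows "card (S_set k n) + k \<le> (\<Sum>s=1..k. n s) + 1"
proof -
  define T where "T s = (\<lambda>r. of_nat r / of_nat (n s) :: rat) ` {..<n s}" for s
  have "card (S_set k n) \<le> Suc (card (S_set k n - {0}))"
    using card_Diff_singleton_if[of "S_set k n" 0] finite_S_set by (auto split: if_splits)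
  also have "S_set k n - {0} \<subseteq> (\<Union>s\<in>{1..k}. T s - {0})" by (auto simp: S_set_eq_UN T_def)
  hence "card (S_set k n - {0}) \<le> card (\<Union>s\<in>{1..k}. T s - {0})"
    by (rule card_mono[rotated]) (simp add: T_def)
  also have "card (\<Union>s\<in>{1..k}. T s - {0}) \<le> (\<Sum>s=1..k. card (T s - {0}))" by (rule card_UN_le) simp
  also have "\<dots> \<le> (\<Sum>s=1..k. n s - 1)"
  proof (rule sum_mono)
    fix s assume "s \<in> {1..k}"
    hence "0 \<in> T s" using assms by (force simp: T_def)
    moreover have "card (T s) \<le> n s" unfolding T_def using card_image_le[of "{..<n s}"] by simp
    ultimately show "card (T s - {0}) \<le> n s - 1" by (simp add: T_def)
  qed
  also have "(\<Sum>s=1..k. n s - 1) = (\<Sum>s=1..k. n s) - k"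
    using assms by (subst sum_subtractf_nat) (auto simp: Suc_le_eq)
  moreover have "k \<le> (\<Sum>s=1..k. n s)"
    using sum_mono[of "{1..k}" "\<lambda>_. 1" n] assms by (simp add: Suc_le_eq)
  ultimately show ?thesis by linarith
qed

lemma roots_of_unity_eq_cis_image_S_set:
  assumes "\<And>s. s \<in> {1..k} \<Longrightarrow> n s > 0"
  shows "roots_of_unity {1..k} n = (\<lambda>q. cis (2 * pi * of_rat q)) ` S_set k n"
proof -
  have "{z :: complex. z ^ n s = 1} = (\<lambda>q. cis (2 * pi * of_rat q)) ` (\<lambda>r. of_nat r / of_nat (n s)) ` {..<n s}"
    if "s \<in> {1..k}" for s
    using Complex.bij_betw_roots_unity[OF assms[OF that]]
    by (simp add: bij_betw_def image_image of_rat_divide)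
  thus ?thesis by (simp add: roots_of_unity_def S_set_eq_UN image_UN)
qed

theorem corollary1p2:
  fixes k p :: nat and n :: "nat \<Rightarrow> nat" and a :: "nat \<Rightarrow> int"
  assumes "k \<ge> 1"
    and "\<And>s. s \<in> {1..k} \<Longrightarrow> n s > 0"
    and "\<And>s. s \<in> {1..k} \<Longrightarrow> 0 \<le> a s \<and> a s < int (n s)"
    and "prime p"
    and "\<And>s. s \<in> {1..k} \<Longrightarrow> \<not> p dvd n s"
    and "(\<Sum>s=1..k. cis (2 * pi * of_int (a s) / of_nat p) /
                       (1 - cis (2 * pi * of_nat (n s) / of_nat p))) = 0"
  shows "int (\<Sum>s=1..k. n s) - int k + 1 \<ge> int (card (S_set k n))
         \<and> card (S_set k n) \<ge> p"
proof
  have "card (S_set k n) + k \<le> (\<Sum>s=1..k. n s) + 1" by (rule card_S_set_le) (rule assms(2))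
  thus "int (\<Sum>s=1..k. n s) - int k + 1 \<ge> int (card (S_set k n))" by linarith
  define \<alpha> where "\<alpha> s = nat (a s)" for s
  have \<alpha>: "\<alpha> s < n s" and "real (\<alpha> s) = of_int (a s)" if "s \<in> {1..k}" for s
    using assms(3)[OF that] by (auto simp: \<alpha>_def)
  hence "frac_sum {1..k} \<alpha> n (cis (2 * pi / p))
      = (\<Sum>s=1..k. cis (2 * pi * of_int (a s) / p) / (1 - cis (2 * pi * of_nat (n s) / p)))"
    unfolding frac_sum_def by (intro sum.cong) (simp_all add: cis_power)
  hence "p \<le> card (roots_of_unity {1..k} n)"
    using assms(1,4,5,6) \<alpha> by (intro prime_le_card_roots_of_unity) auto
  also have "\<dots> \<le> card (S_set k n)"
    using roots_of_unity_eq_cis_image_S_set[of k n] assms(2) card_image_le[OF finite_S_set] by simp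
  finally show "card (S_set k n) \<ge> p" .
qed

end
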